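(* If $x_R=\infty$, then $\alpha(\bar G)\le\alpha(\overline F)+1$ and $\beta(\bar G)\ge\beta(\overline F)+1$. If $x_R<\infty$, then $\alpha(\bar G(x_R-(\cdot)^{-1}))\le\alpha(\overline F(x_R-(\cdot)^{-1}))-1$ and $\beta(\bar G(x_R-(\cdot)^{-1}))\ge\beta(\overline F(x_R-(\cdot)^{-1}))-1$.
   Context: $F$ is a c.d.f. with $F(0)=0$, finite mean $\mathbb{E}[B]$, right endpoint $x_R=\sup\{x:F(x)<1\}\le\infty$; $\overline F=1-F$; $G(x)=\int_0^x\overline F(t)dt/\mathbb{E}[B]$, $\bar G=1-G$. For a function $\phi$, $\phi(x_R-(\cdot)^{-1})$ denotes $x\mapsto\phi(x_R-1/x)$. For positive $f$, the upper Matuszewska index $\alpha(f)$ is the infimum of those $\alpha$ for which there is $C$ such that for each $\Lambda>1$, $f(\mu x)/f(x)\le C(1+o(1))\mu^\alpha$ as $x\to\infty$ uniformly in $\mu\in[1,\Lambda]$; the lower index $\beta(f)$ is the supremum of those $\beta$ for which there is $D>0$ with $f(\mu x)/f(x)\ge D(1+o(1))\mu^\beta$ uniformly in $\mu\in[1,\Lambda]$. *)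

theory Defs
  imports "HOL-Analysis.Analysis"
begin

definition right_endpoint :: "(real \<Rightarrow> real) \<Rightarrow> ereal" where
  "right_endpoint F = Sup (ereal ` {x. F x < 1})"

text \<open>Mean E[B] of a nonnegative random variable with c.d.f. F: integral of the tail.\<close>
definition cdf_mean :: "(real \<Rightarrow> real) \<Rightarrow> real" where
  "cdf_mean F = integral {0..} (\<lambda>t. 1 - F t)"

definition integrated_tail :: "(real \<Rightarrow> real) \<Rightarrow> real \<Rightarrow> real" where
  "integrated_tail F x = integral {0..x} (\<lambda>t. 1 - F t) / cdf_mean F"

definition integrated_tail_bar :: "(real \<Rightarrow> real) \<Rightarrow> real \<Rightarrow> real" where
  "integrated_tail_bar F x = 1 - integrated_tail F x"

text \<open>Upper Matuszewska index; C(1+o(1)) with constant C is written as C + o(1).\<close>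
definition upper_matuszewska :: "(real \<Rightarrow> real) \<Rightarrow> ereal" where
  "upper_matuszewska f = Inf {ereal a | a. \<exists>C. \<forall>\<Lambda>>1. \<forall>\<epsilon>>0.
      eventually (\<lambda>x. \<forall>\<mu>\<in>{1..\<Lambda>}. f (\<mu> * x) / f x \<le> (C + \<epsilon>) * \<mu> powr a) at_top}"

definition lower_matuszewska :: "(real \<Rightarrow> real) \<Rightarrow> ereal" where
  "lower_matuszewska f = Sup {ereal b | b. \<exists>D>0. \<forall>\<Lambda>>1. \<forall>\<epsilon>>0.
      eventually (\<lambda>x. \<forall>\<mu>\<in>{1..\<Lambda>}. f (\<mu> * x) / f x \<ge> (D - \<epsilon>) * \<mu> powr b) at_top}"

end

theory Submission
  imports Defs
begin

text \<open>Since \<open>Gbar y = (1/E[B]) \<integral>\<^sub>y\<^sup>\<infinity> Fbar\<close>, the substitution \<open>s = \<mu> t\<close> gives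
  \<open>Gbar (\<mu> x) = (\<mu>/E[B]) \<integral>\<^sub>x\<^sup>\<infinity> Fbar (\<mu> t) dt\<close>, so every bound \<open>Fbar (\<mu> t) \<le> K Fbar t\<close>
  for \<open>t \<ge> x\<close> yields \<open>Gbar (\<mu> x) \<le> \<mu> K Gbar x\<close> (and likewise for lower bounds): both
  Matuszewska indices move by exactly \<open>+1\<close>. For a finite right endpoint \<open>r\<close>, the variable
  \<open>t = 1/(r - s)\<close> turns \<open>r - 1/(\<mu> t)\<close> into the affine image \<open>s/\<mu> + (r - r/\<mu>)\<close> of \<open>s\<close>, so
  the same computation produces the factor \<open>\<mu>\<^sup>-\<^sup>1\<close> instead; beyond \<open>r\<close> both tails vanish.\<close>

lemma Inf_ereal_shift_le:
  fixes S T :: "ereal set" and k :: real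
  assumes "S \<subseteq> range ereal" and "\<And>a. ereal a \<in> S \<Longrightarrow> ereal (a + k) \<in> T"
  shows "Inf T \<le> Inf S + ereal k"
proof -
  have "Inf T - ereal k \<le> z" if "z \<in> S" for z
  proof -
    obtain a where a: "z = ereal a" using \<open>z \<in> S\<close> assms(1) by blast
    have "Inf T \<le> ereal (a + k)" using assms(2) that a by (intro Inf_lower) auto
    thus ?thesis using a by (cases "Inf T") auto
  qed
  hence "Inf T - ereal k \<le> Inf S" by (rule Inf_greatest)
  thus ?thesis by (cases "Inf T"; cases "Inf S") auto
qed

lemma Sup_ereal_shift_ge:
  fixes S T :: "ereal set" and k :: real
  assumes "S \<subseteq> range ereal" and "\<And>b. ereal b \<in> S \<Longrightarrow> ereal (b + k) \<in> T"
  shows "Sup S + ereal k \<le> Sup T"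
proof -
  have "z \<le> Sup T - ereal k" if "z \<in> S" for z
  proof -
    obtain b where b: "z = ereal b" using \<open>z \<in> S\<close> assms(1) by blast
    have "ereal (b + k) \<le> Sup T" using assms(2) that b by (intro Sup_upper) auto
    thus ?thesis using b by (cases "Sup T") auto
  qed
  hence "Sup S \<le> Sup T - ereal k" by (rule Sup_least)
  thus ?thesis by (cases "Sup T"; cases "Sup S") auto
qed

lemma eventually_ratio_le_transfer:
  fixes f g B :: "real \<Rightarrow> real"
  assumes f_pos: "eventually (\<lambda>x. f x > 0) at_top" and g_pos: "eventually (\<lambda>x. g x > 0) at_top"
    and transfer: "eventually (\<lambda>x. \<forall>\<mu>\<ge>1. \<forall>K. (\<forall>t\<ge>x. f (\<mu> * t) \<le> K * f t)
                     \<longrightarrow> g (\<mu> * x) \<le> \<mu> powr k * K * g x) at_top"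
    and ratio: "eventually (\<lambda>x. \<forall>\<mu>\<in>{1..\<Lambda>}. f (\<mu> * x) / f x \<le> B \<mu>) at_top"
  shows "eventually (\<lambda>x. \<forall>\<mu>\<in>{1..\<Lambda>}. g (\<mu> * x) / g x \<le> \<mu> powr k * B \<mu>) at_top"
  using eventually_all_ge_at_top[OF ratio] eventually_all_ge_at_top[OF f_pos] g_pos transfer
proof eventually_elim
  case (elim x)
  show ?case
  proof
    fix \<mu> assume \<mu>: "\<mu> \<in> {1..\<Lambda>}"
    have "\<forall>t\<ge>x. f (\<mu> * t) \<le> B \<mu> * f t"
      using elim \<mu> by (auto simp: divide_le_eq)
    hence "g (\<mu> * x) \<le> \<mu> powr k * B \<mu> * g x" using elim \<mu> by auto
    thus "g (\<mu> * x) / g x \<le> \<mu> powr k * B \<mu>" using elim by (simp add: divide_le_eq)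
  qed
qed

lemma eventually_ratio_ge_transfer:
  fixes f g B :: "real \<Rightarrow> real"
  assumes f_pos: "eventually (\<lambda>x. f x > 0) at_top" and g_pos: "eventually (\<lambda>x. g x > 0) at_top"
    and transfer: "eventually (\<lambda>x. \<forall>\<mu>\<ge>1. \<forall>K. (\<forall>t\<ge>x. f (\<mu> * t) \<ge> K * f t)
                     \<longrightarrow> g (\<mu> * x) \<ge> \<mu> powr k * K * g x) at_top"
    and ratio: "eventually (\<lambda>x. \<forall>\<mu>\<in>{1..\<Lambda>}. f (\<mu> * x) / f x \<ge> B \<mu>) at_top"
  shows "eventually (\<lambda>x. \<forall>\<mu>\<in>{1..\<Lambda>}. g (\<mu> * x) / g x \<ge> \<mu> powr k * B \<mu>) at_top"
  using eventually_all_ge_at_top[OF ratio] eventually_all_ge_at_top[OF f_pos] g_pos transfer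
proof eventually_elim
  case (elim x)
  show ?case
  proof
    fix \<mu> assume \<mu>: "\<mu> \<in> {1..\<Lambda>}"
    have "\<forall>t\<ge>x. f (\<mu> * t) \<ge> B \<mu> * f t"
      using elim \<mu> by (auto simp: le_divide_eq)
    hence "g (\<mu> * x) \<ge> \<mu> powr k * B \<mu> * g x" using elim \<mu> by auto
    thus "g (\<mu> * x) / g x \<ge> \<mu> powr k * B \<mu>" using elim by (simp add: le_divide_eq)
  qed
qed

lemma upper_matuszewska_transfer:
  fixes f g :: "real \<Rightarrow> real"
  assumes "eventually (\<lambda>x. f x > 0) at_top" and "eventually (\<lambda>x. g x > 0) at_top"
    and "eventually (\<lambda>x. \<forall>\<mu>\<ge>1. \<forall>K. (\<forall>t\<ge>x. f (\<mu> * t) \<le> K * f t)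
           \<longrightarrow> g (\<mu> * x) \<le> \<mu> powr k * K * g x) at_top"
  shows "upper_matuszewska g \<le> upper_matuszewska f + ereal k"
  unfolding upper_matuszewska_def
proof (rule Inf_ereal_shift_le)
  fix a assume "ereal a \<in> {ereal a | a. \<exists>C. \<forall>\<Lambda>>1. \<forall>\<epsilon>>0.
      eventually (\<lambda>x. \<forall>\<mu>\<in>{1..\<Lambda>}. f (\<mu> * x) / f x \<le> (C + \<epsilon>) * \<mu> powr a) at_top}"
  then obtain C where C: "\<And>\<Lambda> \<epsilon>. \<Lambda> > 1 \<Longrightarrow> \<epsilon> > 0 \<Longrightarrow>
      eventually (\<lambda>x. \<forall>\<mu>\<in>{1..\<Lambda>}. f (\<mu> * x) / f x \<le> (C + \<epsilon>) * \<mu> powr a) at_top" by auto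
  have "eventually (\<lambda>x. \<forall>\<mu>\<in>{1..\<Lambda>}. g (\<mu> * x) / g x \<le> (C + \<epsilon>) * \<mu> powr (a + k)) at_top"
    if "\<Lambda> > 1" "\<epsilon> > 0" for \<Lambda> \<epsilon>
    using eventually_ratio_le_transfer[OF assms C[OF that]] by (simp add: powr_add mult_ac)
  thus "ereal (a + k) \<in> {ereal a | a. \<exists>C. \<forall>\<Lambda>>1. \<forall>\<epsilon>>0.
      eventually (\<lambda>x. \<forall>\<mu>\<in>{1..\<Lambda>}. g (\<mu> * x) / g x \<le> (C + \<epsilon>) * \<mu> powr a) at_top}" by blast
qed auto

lemma lower_matuszewska_transfer:
  fixes f g :: "real \<Rightarrow> real"
  assumes "eventually (\<lambda>x. f x > 0) at_top" and "eventually (\<lambda>x. g x > 0) at_top"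
    and "eventually (\<lambda>x. \<forall>\<mu>\<ge>1. \<forall>K. (\<forall>t\<ge>x. f (\<mu> * t) \<ge> K * f t)
           \<longrightarrow> g (\<mu> * x) \<ge> \<mu> powr k * K * g x) at_top"
  shows "lower_matuszewska f + ereal k \<le> lower_matuszewska g"
  unfolding lower_matuszewska_def
proof (rule Sup_ereal_shift_ge)
  fix b assume "ereal b \<in> {ereal b | b. \<exists>D>0. \<forall>\<Lambda>>1. \<forall>\<epsilon>>0.
      eventually (\<lambda>x. \<forall>\<mu>\<in>{1..\<Lambda>}. f (\<mu> * x) / f x \<ge> (D - \<epsilon>) * \<mu> powr b) at_top}"
  then obtain D where "D > 0" and D: "\<And>\<Lambda> \<epsilon>. \<Lambda> > 1 \<Longrightarrow> \<epsilon> > 0 \<Longrightarrow>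
      eventually (\<lambda>x. \<forall>\<mu>\<in>{1..\<Lambda>}. f (\<mu> * x) / f x \<ge> (D - \<epsilon>) * \<mu> powr b) at_top" by auto
  have "eventually (\<lambda>x. \<forall>\<mu>\<in>{1..\<Lambda>}. g (\<mu> * x) / g x \<ge> (D - \<epsilon>) * \<mu> powr (b + k)) at_top"
    if "\<Lambda> > 1" "\<epsilon> > 0" for \<Lambda> \<epsilon>
    using eventually_ratio_ge_transfer[OF assms D[OF that]] by (simp add: powr_add mult_ac)
  thus "ereal (b + k) \<in> {ereal b | b. \<exists>D>0. \<forall>\<Lambda>>1. \<forall>\<epsilon>>0.
      eventually (\<lambda>x. \<forall>\<mu>\<in>{1..\<Lambda>}. g (\<mu> * x) / g x \<ge> (D - \<epsilon>) * \<mu> powr b) at_top}"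
    using \<open>D > 0\<close> by blast
qed auto

lemma integral_halfline_affine:
  fixes h :: "real \<Rightarrow> real"
  assumes m: "m > 0" and h: "h absolutely_integrable_on {m * y + c..}"
  shows "(\<lambda>s. h (m * s + c)) integrable_on {y..}"
    and "integral {m * y + c..} h = m * integral {y..} (\<lambda>s. h (m * s + c))"
proof -
  let ?A = "{m * y + c..}"
  have shift: "(\<lambda>x. indicator ?A (c + m * x) *\<^sub>R h (c + m * x))
             = (\<lambda>x. indicator {y..} x *\<^sub>R h (m * x + c))"
    using m by (auto simp: indicator_def algebra_simps fun_eq_iff)
  have I: "integrable lebesgue (\<lambda>x. indicator ?A x *\<^sub>R h x)"
    using h by (simp add: set_integrable_def)
  have "integrable lebesgue (\<lambda>x. indicator {y..} x *\<^sub>R h (m * x + c))"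
    using lebesgue_integrable_real_affine[OF I, of m c] m shift by simp
  hence S: "set_integrable lebesgue {y..} (\<lambda>x. h (m * x + c))"
    by (simp add: set_integrable_def)
  thus "(\<lambda>s. h (m * s + c)) integrable_on {y..}"
    by (rule set_lebesgue_integral_eq_integral(1))
  have "integral ?A h = (LINT x:?A | lebesgue. h x)"
    using set_lebesgue_integral_eq_integral(2)[OF h] by simp
  also have "\<dots> = m * (LINT x:{y..} | lebesgue. h (m * x + c))"
    using lebesgue_integral_real_affine[of m "\<lambda>x. indicator ?A x *\<^sub>R h x" c] m shift
    by (simp add: set_lebesgue_integral_def)
  also have "\<dots> = m * integral {y..} (\<lambda>s. h (m * s + c))"
    using set_lebesgue_integral_eq_integral(2)[OF S] by simp
  finally show "integral {m * y + c..} h = m * integral {y..} (\<lambda>s. h (m * s + c))" .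
qed

locale cdf_finite_mean =
  fixes F :: "real \<Rightarrow> real"
  assumes mono: "mono F"
    and rcont: "\<And>x. continuous (at_right x) F"
    and lim_top: "(F \<longlongrightarrow> 1) at_top"
    and F0: "F 0 = 0"
    and finite_mean: "(\<lambda>t. 1 - F t) integrable_on {0..}"
begin

abbreviation Fbar :: "real \<Rightarrow> real" where
  "Fbar x \<equiv> 1 - F x"

lemma F_le_1: "F x \<le> 1"
proof (rule tendsto_lowerbound[OF lim_top])
  show "eventually (\<lambda>y. F x \<le> F y) at_top"
    using eventually_ge_at_top[of x] by eventually_elim (use mono in \<open>auto simp: mono_def\<close>)
qed simp

lemma Fbar_nonneg: "0 \<le> Fbar x"
  using F_le_1[of x] by simp

lemma Fbar_antimono: "s \<le> z \<Longrightarrow> Fbar z \<le> Fbar s"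
  using mono by (simp add: mono_def)

lemma Fbar_absolutely_integrable: "Fbar absolutely_integrable_on {0..}"
  using finite_mean Fbar_nonneg by (intro nonnegative_absolutely_integrable_1) auto

lemma Fbar_absolutely_integrable_subset:
  "A \<subseteq> {0..} \<Longrightarrow> A \<in> sets lebesgue \<Longrightarrow> Fbar absolutely_integrable_on A"
  using Fbar_absolutely_integrable by (rule set_integrable_subset)

lemma Fbar_integrable_subset:
  "A \<subseteq> {0..} \<Longrightarrow> A \<in> sets lebesgue \<Longrightarrow> Fbar integrable_on A"
  using Fbar_absolutely_integrable_subset by (rule set_lebesgue_integral_eq_integral(1))

lemma cmult_Fbar_integrable_halfline: "0 \<le> y \<Longrightarrow> (\<lambda>s. K * Fbar s) integrable_on {y..}"
  using integrable_on_cmult_left[OF Fbar_integrable_subset[of "{y..}"]] by simp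

lemma integral_Fbar_pos:
  assumes "0 \<le> y" "y < z" "Fbar z > 0"
  shows "integral {y..} Fbar > 0"
proof -
  have "0 < Fbar z * (z - y)" using assms by simp
  also have "\<dots> = integral {y..z} (\<lambda>_. Fbar z)" using assms by simp
  also have "\<dots> \<le> integral {y..z} Fbar"
    using assms Fbar_antimono by (intro integral_le Fbar_integrable_subset) auto
  also have "\<dots> \<le> integral {y..} Fbar"
    using assms Fbar_nonneg by (intro integral_subset_le Fbar_integrable_subset) auto
  finally show ?thesis .
qed

lemma cdf_mean_pos: "cdf_mean F > 0"
proof -
  have "eventually (\<lambda>x. F x < 1) (at_right 0)"
    using rcont[of 0] F0 by (intro order_tendstoD(2)) (auto simp: continuous_within)
  then obtain b where "b > 0" "\<And>y. 0 < y \<Longrightarrow> y < b \<Longrightarrow> F y < 1"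
    by (auto simp: eventually_at_right_field)
  hence "integral {0..} Fbar > 0" by (intro integral_Fbar_pos[of 0 "b / 2"]) auto
  thus ?thesis by (simp add: cdf_mean_def)
qed

lemma integrated_tail_bar_eq:
  assumes "0 \<le> y"
  shows "integrated_tail_bar F y = integral {y..} Fbar / cdf_mean F"
proof -
  have "(Fbar has_integral (integral {0..y} Fbar + integral {y..} Fbar)) ({0..y} \<union> {y..})"
    using assms by (intro has_integral_Un integrable_integral Fbar_integrable_subset) auto
  moreover have "{0..y} \<union> {y..} = {0..}" using assms by auto
  ultimately have "cdf_mean F = integral {0..y} Fbar + integral {y..} Fbar"
    unfolding cdf_mean_def by (metis integral_unique)
  thus ?thesis using cdf_mean_pos
    by (simp add: integrated_tail_bar_def integrated_tail_def field_simps)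
qed

lemma integrated_tail_bar_affine:
  assumes "m > 0" "0 \<le> y" "0 \<le> m * y + c"
  shows "(\<lambda>s. Fbar (m * s + c)) integrable_on {y..}"
    and "integrated_tail_bar F (m * y + c) = m * integral {y..} (\<lambda>s. Fbar (m * s + c)) / cdf_mean F"
  using integral_halfline_affine[OF assms(1) Fbar_absolutely_integrable_subset] assms
  by (auto simp: integrated_tail_bar_eq)

lemma F_less_1_if_right_endpoint_infinite:
  assumes "right_endpoint F = \<infinity>"
  shows "F y < 1"
proof (rule ccontr)
  assume "\<not> F y < 1"
  hence "z < y" if "F z < 1" for z
    using mono that by (meson le_less_trans linorder_not_le monoD)
  hence "right_endpoint F \<le> ereal y"
    unfolding right_endpoint_def by (intro Sup_least) (auto intro: less_imp_le)
  thus False using assms by simp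
qed

lemma integrated_tail_bar_scaled_le:
  assumes x: "0 \<le> x" and \<mu>: "1 \<le> \<mu>" and ratio: "\<forall>t\<ge>x. Fbar (\<mu> * t) \<le> K * Fbar t"
  shows "integrated_tail_bar F (\<mu> * x) \<le> \<mu> powr 1 * K * integrated_tail_bar F x"
proof -
  note affine = integrated_tail_bar_affine[of \<mu> x 0]
  have "integral {x..} (\<lambda>s. Fbar (\<mu> * s)) \<le> integral {x..} (\<lambda>s. K * Fbar s)"
    using affine(1) x \<mu> ratio by (intro integral_le cmult_Fbar_integrable_halfline) auto
  hence "\<mu> * integral {x..} (\<lambda>s. Fbar (\<mu> * s)) / cdf_mean F \<le> \<mu> * (K * integral {x..} Fbar) / cdf_mean F"
    using \<mu> cdf_mean_pos by (intro divide_right_mono mult_left_mono) auto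
  thus ?thesis
    using affine(2) x \<mu> integrated_tail_bar_eq[OF x] by simp
qed

lemma integrated_tail_bar_scaled_ge:
  assumes x: "0 \<le> x" and \<mu>: "1 \<le> \<mu>" and ratio: "\<forall>t\<ge>x. Fbar (\<mu> * t) \<ge> K * Fbar t"
  shows "integrated_tail_bar F (\<mu> * x) \<ge> \<mu> powr 1 * K * integrated_tail_bar F x"
proof -
  note affine = integrated_tail_bar_affine[of \<mu> x 0]
  have "integral {x..} (\<lambda>s. Fbar (\<mu> * s)) \<ge> integral {x..} (\<lambda>s. K * Fbar s)"
    using affine(1) x \<mu> ratio by (intro integral_le cmult_Fbar_integrable_halfline) auto
  hence "\<mu> * integral {x..} (\<lambda>s. Fbar (\<mu> * s)) / cdf_mean F \<ge> \<mu> * (K * integral {x..} Fbar) / cdf_mean F"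
    using \<mu> cdf_mean_pos by (intro divide_right_mono mult_left_mono) auto
  thus ?thesis
    using affine(2) x \<mu> integrated_tail_bar_eq[OF x] by simp
qed

theorem matuszewska_integrated_tail_bar:
  assumes "right_endpoint F = \<infinity>"
  shows "upper_matuszewska (integrated_tail_bar F) \<le> upper_matuszewska Fbar + 1"
    and "lower_matuszewska Fbar + 1 \<le> lower_matuszewska (integrated_tail_bar F)"
proof -
  have Fbar_pos: "eventually (\<lambda>x. Fbar x > 0) at_top"
    using F_less_1_if_right_endpoint_infinite[OF assms] by simp
  have G_pos: "eventually (\<lambda>x. integrated_tail_bar F x > 0) at_top"
    using eventually_ge_at_top[of 0]
  proof eventually_elim
    case (elim x)
    thus ?case using F_less_1_if_right_endpoint_infinite[OF assms] cdf_mean_pos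
      by (simp add: integrated_tail_bar_eq integral_Fbar_pos[of x "x + 1"])
  qed
  have "eventually (\<lambda>x. \<forall>\<mu>\<ge>1. \<forall>K. (\<forall>t\<ge>x. Fbar (\<mu> * t) \<le> K * Fbar t)
      \<longrightarrow> integrated_tail_bar F (\<mu> * x) \<le> \<mu> powr 1 * K * integrated_tail_bar F x) at_top"
    using eventually_ge_at_top[of 0] by eventually_elim (blast intro: integrated_tail_bar_scaled_le)
  from upper_matuszewska_transfer[OF Fbar_pos G_pos this]
  show "upper_matuszewska (integrated_tail_bar F) \<le> upper_matuszewska Fbar + 1"
    by (simp add: one_ereal_def)
  have "eventually (\<lambda>x. \<forall>\<mu>\<ge>1. \<forall>K. (\<forall>t\<ge>x. Fbar (\<mu> * t) \<ge> K * Fbar t)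
      \<longrightarrow> integrated_tail_bar F (\<mu> * x) \<ge> \<mu> powr 1 * K * integrated_tail_bar F x) at_top"
    using eventually_ge_at_top[of 0] by eventually_elim (blast intro: integrated_tail_bar_scaled_ge)
  from lower_matuszewska_transfer[OF Fbar_pos G_pos this]
  show "lower_matuszewska Fbar + 1 \<le> lower_matuszewska (integrated_tail_bar F)"
    by (simp add: one_ereal_def)
qed

context
  fixes r :: real
  assumes endpoint: "right_endpoint F = ereal r"
begin

lemma F_less_1_below_right_endpoint: "y < r \<Longrightarrow> F y < 1"
proof -
  assume "y < r"
  hence "ereal y < Sup (ereal ` {x. F x < 1})" using endpoint by (simp add: right_endpoint_def)
  then obtain z where "F z < 1" "y < z" by (auto simp: less_Sup_iff)
  thus "F y < 1" using mono by (meson le_less_trans less_imp_le monoD)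
qed

lemma Fbar_eq_0_above_right_endpoint:
  assumes "r \<le> y"
  shows "Fbar y = 0"
proof -
  have F_eq_1: "F z = 1" if "r < z" for z
  proof (rule ccontr)
    assume "F z \<noteq> 1"
    hence "ereal z \<le> right_endpoint F"
      using F_le_1[of z] unfolding right_endpoint_def by (intro Sup_upper) auto
    thus False using endpoint that by simp
  qed
  have "eventually (\<lambda>z. F z = 1) (at_right r)"
    unfolding eventually_at_right_field using F_eq_1 by (intro exI[of _ "r + 1"]) auto
  hence "(F \<longlongrightarrow> 1) (at_right r)" by (rule tendsto_eventually)
  moreover have "(F \<longlongrightarrow> F r) (at_right r)" using rcont[of r] by (simp add: continuous_within)
  ultimately have "F r = 1" using tendsto_unique trivial_limit_at_right_real by blast
  thus ?thesis using assms F_eq_1 by (cases "y = r") auto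
qed

lemma right_endpoint_pos: "0 < r"
  using F_less_1_below_right_endpoint Fbar_eq_0_above_right_endpoint[of 0] F0 by force

lemma reflected_point_nonneg:
  assumes "1 / r < x"
  shows "0 < x" and "0 \<le> r - 1 / x"
proof -
  show "0 < x" using assms right_endpoint_pos by (smt (verit) divide_pos_pos)
  thus "0 \<le> r - 1 / x" using assms right_endpoint_pos by (simp add: field_simps)
qed

lemma reflection_cases:
  assumes "0 < x" "1 \<le> \<mu>" "r - 1 / x \<le> s"
  obtains (beyond) "Fbar (1 / \<mu> * s + (r - r / \<mu>)) = 0" "Fbar s = 0"
  | (reflected) t where "x \<le> t" "1 / \<mu> * s + (r - r / \<mu>) = r - 1 / (\<mu> * t)" "s = r - 1 / t"
proof (cases "s < r")
  case True
  have "x \<le> 1 / (r - s)"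
    using assms True by (simp add: field_simps)
  moreover have "1 / \<mu> * s + (r - r / \<mu>) = r - 1 / (\<mu> * (1 / (r - s)))"
    using assms True by (simp add: field_simps)
  ultimately show ?thesis using that(2)[of "1 / (r - s)"] by simp
next
  case False
  have "r \<le> 1 / \<mu> * s + (r - r / \<mu>)"
    using False assms by (simp add: field_simps)
  thus ?thesis using that(1) False Fbar_eq_0_above_right_endpoint by simp
qed

lemma integrated_tail_bar_reflected:
  assumes x: "1 / r < x" and \<mu>: "1 \<le> \<mu>"
  shows "(\<lambda>s. Fbar (1 / \<mu> * s + (r - r / \<mu>))) integrable_on {r - 1 / x..}"
    and "integrated_tail_bar F (r - 1 / (\<mu> * x))
           = \<mu> powr (-1) * integral {r - 1 / x..} (\<lambda>s. Fbar (1 / \<mu> * s + (r - r / \<mu>))) / cdf_mean F"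
proof -
  note x_pos = reflected_point_nonneg[OF x]
  have image: "1 / \<mu> * (r - 1 / x) + (r - r / \<mu>) = r - 1 / (\<mu> * x)"
    using x_pos \<mu> by (simp add: field_simps)
  have "1 / (\<mu> * x) \<le> 1 / x"
    using x_pos \<mu> by (simp add: field_simps)
  hence "0 \<le> r - 1 / x" "0 \<le> 1 / \<mu> * (r - 1 / x) + (r - r / \<mu>)"
    using x_pos unfolding image by linarith+
  note affine = integrated_tail_bar_affine[of "1 / \<mu>", OF _ this]
  show "(\<lambda>s. Fbar (1 / \<mu> * s + (r - r / \<mu>))) integrable_on {r - 1 / x..}"
    using affine(1) \<mu> by simp
  show "integrated_tail_bar F (r - 1 / (\<mu> * x))
      = \<mu> powr (-1) * integral {r - 1 / x..} (\<lambda>s. Fbar (1 / \<mu> * s + (r - r / \<mu>))) / cdf_mean F"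
    using affine(2) \<mu> unfolding image by (simp add: powr_minus_divide)
qed

lemma integrated_tail_bar_reflected_scaled_le:
  assumes x: "1 / r < x" and \<mu>: "1 \<le> \<mu>"
    and ratio: "\<forall>t\<ge>x. Fbar (r - 1 / (\<mu> * t)) \<le> K * Fbar (r - 1 / t)"
  shows "integrated_tail_bar F (r - 1 / (\<mu> * x))
           \<le> \<mu> powr (-1) * K * integrated_tail_bar F (r - 1 / x)"
proof -
  note x_pos = reflected_point_nonneg[OF x]
  have "Fbar (1 / \<mu> * s + (r - r / \<mu>)) \<le> K * Fbar s" if "s \<in> {r - 1 / x..}" for s
    using x_pos(1) \<mu> that[unfolded atLeast_iff]
  proof (cases rule: reflection_cases)
    case (reflected t)
    show ?thesis by (subst reflected(2), subst reflected(3)) (rule ratio[rule_format, OF reflected(1)])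
  qed simp
  hence "integral {r - 1 / x..} (\<lambda>s. Fbar (1 / \<mu> * s + (r - r / \<mu>)))
      \<le> integral {r - 1 / x..} (\<lambda>s. K * Fbar s)"
    by (intro integral_le integrated_tail_bar_reflected(1)[OF x \<mu>] cmult_Fbar_integrable_halfline x_pos)
  hence "\<mu> powr (-1) * integral {r - 1 / x..} (\<lambda>s. Fbar (1 / \<mu> * s + (r - r / \<mu>))) / cdf_mean F
      \<le> \<mu> powr (-1) * (K * integral {r - 1 / x..} Fbar) / cdf_mean F"
    using cdf_mean_pos by (intro divide_right_mono mult_left_mono) auto
  thus ?thesis
    using integrated_tail_bar_reflected(2)[OF x \<mu>] integrated_tail_bar_eq[OF x_pos(2)] by simp
qed

lemma integrated_tail_bar_reflected_scaled_ge:
  assumes x: "1 / r < x" and \<mu>: "1 \<le> \<mu>"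
    and ratio: "\<forall>t\<ge>x. Fbar (r - 1 / (\<mu> * t)) \<ge> K * Fbar (r - 1 / t)"
  shows "integrated_tail_bar F (r - 1 / (\<mu> * x))
           \<ge> \<mu> powr (-1) * K * integrated_tail_bar F (r - 1 / x)"
proof -
  note x_pos = reflected_point_nonneg[OF x]
  have "Fbar (1 / \<mu> * s + (r - r / \<mu>)) \<ge> K * Fbar s" if "s \<in> {r - 1 / x..}" for s
    using x_pos(1) \<mu> that[unfolded atLeast_iff]
  proof (cases rule: reflection_cases)
    case (reflected t)
    show ?thesis by (subst reflected(2), subst reflected(3)) (rule ratio[rule_format, OF reflected(1)])
  qed simp
  hence "integral {r - 1 / x..} (\<lambda>s. Fbar (1 / \<mu> * s + (r - r / \<mu>)))
      \<ge> integral {r - 1 / x..} (\<lambda>s. K * Fbar s)"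
    by (intro integral_le integrated_tail_bar_reflected(1)[OF x \<mu>] cmult_Fbar_integrable_halfline x_pos)
  hence "\<mu> powr (-1) * integral {r - 1 / x..} (\<lambda>s. Fbar (1 / \<mu> * s + (r - r / \<mu>))) / cdf_mean F
      \<ge> \<mu> powr (-1) * (K * integral {r - 1 / x..} Fbar) / cdf_mean F"
    using cdf_mean_pos by (intro divide_right_mono mult_left_mono) auto
  thus ?thesis
    using integrated_tail_bar_reflected(2)[OF x \<mu>] integrated_tail_bar_eq[OF x_pos(2)] by simp
qed

theorem matuszewska_reflected_integrated_tail_bar:
  shows "upper_matuszewska (\<lambda>x. integrated_tail_bar F (r - 1 / x))
           \<le> upper_matuszewska (\<lambda>x. Fbar (r - 1 / x)) - 1"
    and "lower_matuszewska (\<lambda>x. Fbar (r - 1 / x)) - 1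
           \<le> lower_matuszewska (\<lambda>x. integrated_tail_bar F (r - 1 / x))"
proof -
  have Fbar_pos: "eventually (\<lambda>x. Fbar (r - 1 / x) > 0) at_top"
    using eventually_gt_at_top[of "1 / r"]
    by eventually_elim (simp add: F_less_1_below_right_endpoint reflected_point_nonneg)
  have G_pos: "eventually (\<lambda>x. integrated_tail_bar F (r - 1 / x) > 0) at_top"
    using eventually_gt_at_top[of "1 / r"]
  proof eventually_elim
    case (elim x)
    note x_pos = reflected_point_nonneg[OF elim]
    have between: "r - 1 / x < r - 1 / (2 * x)" "r - 1 / (2 * x) < r"
      using x_pos by (simp_all add: field_simps)
    have "integral {r - 1 / x..} Fbar > 0"
      using F_less_1_below_right_endpoint[OF between(2)]
      by (intro integral_Fbar_pos[OF x_pos(2) between(1)]) simp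
    thus ?case using integrated_tail_bar_eq[OF x_pos(2)] cdf_mean_pos by simp
  qed
  have minus_one: "z + ereal (-1) = z - 1" for z :: ereal
    by (cases z) (auto simp: one_ereal_def)
  have "eventually (\<lambda>x. \<forall>\<mu>\<ge>1. \<forall>K. (\<forall>t\<ge>x. Fbar (r - 1 / (\<mu> * t)) \<le> K * Fbar (r - 1 / t))
      \<longrightarrow> integrated_tail_bar F (r - 1 / (\<mu> * x))
            \<le> \<mu> powr (-1) * K * integrated_tail_bar F (r - 1 / x)) at_top"
    using eventually_gt_at_top[of "1 / r"]
    by eventually_elim (blast intro: integrated_tail_bar_reflected_scaled_le)
  from upper_matuszewska_transfer[OF Fbar_pos G_pos this]
  show "upper_matuszewska (\<lambda>x. integrated_tail_bar F (r - 1 / x))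
      \<le> upper_matuszewska (\<lambda>x. Fbar (r - 1 / x)) - 1"
    by (simp only: minus_one)
  have "eventually (\<lambda>x. \<forall>\<mu>\<ge>1. \<forall>K. (\<forall>t\<ge>x. Fbar (r - 1 / (\<mu> * t)) \<ge> K * Fbar (r - 1 / t))
      \<longrightarrow> integrated_tail_bar F (r - 1 / (\<mu> * x))
            \<ge> \<mu> powr (-1) * K * integrated_tail_bar F (r - 1 / x)) at_top"
    using eventually_gt_at_top[of "1 / r"]
    by eventually_elim (blast intro: integrated_tail_bar_reflected_scaled_ge)
  from lower_matuszewska_transfer[OF Fbar_pos G_pos this]
  show "lower_matuszewska (\<lambda>x. Fbar (r - 1 / x)) - 1
      \<le> lower_matuszewska (\<lambda>x. integrated_tail_bar F (r - 1 / x))"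
    by (simp only: minus_one)
qed

end

end

theorem lemma7:
  fixes F :: "real \<Rightarrow> real"
  assumes mono: "mono F"
    and rcont: "\<And>x. continuous (at_right x) F"
    and lim_bot: "(F \<longlongrightarrow> 0) at_bot"
    and lim_top: "(F \<longlongrightarrow> 1) at_top"
    and F0: "F 0 = 0"
    and finite_mean: "(\<lambda>t. 1 - F t) integrable_on {0..}"
  shows "(right_endpoint F = \<infinity> \<longrightarrow>
            upper_matuszewska (integrated_tail_bar F)
              \<le> upper_matuszewska (\<lambda>x. 1 - F x) + 1
          \<and> lower_matuszewska (integrated_tail_bar F)
              \<ge> lower_matuszewska (\<lambda>x. 1 - F x) + 1)
       \<and> (\<forall>r::real. right_endpoint F = ereal r \<longrightarrow>
            upper_matuszewska (\<lambda>x. integrated_tail_bar F (r - 1 / x))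
              \<le> upper_matuszewska (\<lambda>x. 1 - F (r - 1 / x)) - 1
          \<and> lower_matuszewska (\<lambda>x. integrated_tail_bar F (r - 1 / x))
              \<ge> lower_matuszewska (\<lambda>x. 1 - F (r - 1 / x)) - 1)"
proof -
  \<comment> \<open>\<open>lim_bot\<close> is not needed: only values of \<open>F\<close> on \<open>[0, \<infinity>)\<close> enter, and there \<open>F 0 = 0\<close> suffices.\<close>
  interpret cdf_finite_mean F
    using mono rcont lim_top F0 finite_mean by unfold_locales
  show ?thesis
    using matuszewska_integrated_tail_bar matuszewska_reflected_integrated_tail_bar by blast
qed

end
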